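(* Let $T:\mathcal{M}_d\to\mathcal{M}_d$ be a doubly stochastic quantum channel. The following are equivalent: (1) $T$ is primitive; (2) there exists $n\in\mathbb{N}$ such that $(T^* )^nT^n$ is primitive.
   Context: A quantum channel is a completely positive trace-preserving map; doubly stochastic means $T(\mathbb{1})=T^*(\mathbb{1})=\mathbb{1}$, with $T^*$ the Hilbert–Schmidt adjoint. A doubly stochastic channel $S$ is primitive if $\lim_{k\to\infty}S^k(\rho)=\mathbb{1}_d/d$ for every density matrix $\rho$. *)

theory Defs
  imports Complex_Main "Jordan_Normal_Form.Matrix"
begin

text \<open>Matrices in M_d are represented as complex matrices in carrier_mat d d;
  superoperators are functions complex mat => complex mat, of which only the
  behaviour on carrier_mat d d is relevant.\<close>

definition cdagger :: "complex mat \<Rightarrow> complex mat" where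
  "cdagger A = mat (dim_col A) (dim_row A) (\<lambda>(i,j). cnj (A $$ (j,i)))"

definition ctrace :: "complex mat \<Rightarrow> complex" where
  "ctrace A = (\<Sum>i<dim_row A. A $$ (i,i))"

definition psd :: "nat \<Rightarrow> complex mat \<Rightarrow> bool" where
  "psd n A \<longleftrightarrow> A \<in> carrier_mat n n \<and> cdagger A = A \<and>
     (\<forall>v :: nat \<Rightarrow> complex.
        Re (\<Sum>i<n. \<Sum>j<n. cnj (v i) * A $$ (i,j) * v j) \<ge> 0)"

definition density :: "nat \<Rightarrow> complex mat \<Rightarrow> bool" where
  "density d \<rho> \<longleftrightarrow> psd d \<rho> \<and> ctrace \<rho> = 1"

definition linear_superop :: "nat \<Rightarrow> (complex mat \<Rightarrow> complex mat) \<Rightarrow> bool" where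
  "linear_superop d T \<longleftrightarrow>
     (\<forall>A \<in> carrier_mat d d. T A \<in> carrier_mat d d) \<and>
     (\<forall>A \<in> carrier_mat d d. \<forall>B \<in> carrier_mat d d. \<forall>c :: complex.
        T (c \<cdot>\<^sub>m A + B) = c \<cdot>\<^sub>m T A + T B)"

text \<open>Ampliation id_k \<otimes> T acting on M_k(M_d) = M_{kd}: the (a,b) block of size d
  (rows a*d..a*d+d-1, columns b*d..b*d+d-1) is mapped by T.\<close>
definition ampliation :: "nat \<Rightarrow> nat \<Rightarrow> (complex mat \<Rightarrow> complex mat) \<Rightarrow> complex mat \<Rightarrow> complex mat" where
  "ampliation k d T X = mat (k*d) (k*d) (\<lambda>(r,s).
      T (mat d d (\<lambda>(p,q). X $$ ((r div d) * d + p, (s div d) * d + q))) $$ (r mod d, s mod d))"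

definition completely_positive :: "nat \<Rightarrow> (complex mat \<Rightarrow> complex mat) \<Rightarrow> bool" where
  "completely_positive d T \<longleftrightarrow>
     (\<forall>k :: nat. \<forall>X. psd (k*d) X \<longrightarrow> psd (k*d) (ampliation k d T X))"

definition trace_preserving :: "nat \<Rightarrow> (complex mat \<Rightarrow> complex mat) \<Rightarrow> bool" where
  "trace_preserving d T \<longleftrightarrow> (\<forall>A \<in> carrier_mat d d. ctrace (T A) = ctrace A)"

definition quantum_channel :: "nat \<Rightarrow> (complex mat \<Rightarrow> complex mat) \<Rightarrow> bool" where
  "quantum_channel d T \<longleftrightarrow> linear_superop d T \<and> completely_positive d T \<and> trace_preserving d T"

definition is_hs_adjoint :: "nat \<Rightarrow> (complex mat \<Rightarrow> complex mat) \<Rightarrow> (complex mat \<Rightarrow> complex mat) \<Rightarrow> bool" where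
  "is_hs_adjoint d T S \<longleftrightarrow>
     (\<forall>A \<in> carrier_mat d d. S A \<in> carrier_mat d d) \<and>
     (\<forall>A \<in> carrier_mat d d. \<forall>B \<in> carrier_mat d d.
        ctrace (cdagger A * T B) = ctrace (cdagger (S A) * B))"

definition doubly_stochastic_channel ::
  "nat \<Rightarrow> (complex mat \<Rightarrow> complex mat) \<Rightarrow> (complex mat \<Rightarrow> complex mat) \<Rightarrow> bool" where
  "doubly_stochastic_channel d T Tadj \<longleftrightarrow>
     quantum_channel d T \<and> T (1\<^sub>m d) = 1\<^sub>m d \<and> Tadj (1\<^sub>m d) = 1\<^sub>m d"

definition primitive :: "nat \<Rightarrow> (complex mat \<Rightarrow> complex mat) \<Rightarrow> bool" where
  "primitive d S \<longleftrightarrow>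
     (\<forall>\<rho>. density d \<rho> \<longrightarrow>
        (\<forall>i<d. \<forall>j<d. (\<lambda>k. (S ^^ k) \<rho> $$ (i,j)) \<longlonglongrightarrow>
            (if i = j then 1 / of_nat d else 0)))"

end

theory Submission
  imports Defs "HOL-Analysis.Convex"
begin

text \<open>
  Since density matrices span M_d and S \<one> = \<one>, a unital
  linear map S is primitive iff S^k X \<rightarrow> 0 for every traceless X, and in finite dimension this
  decay is uniform: some power of S contracts the traceless subspace in Hilbert--Schmidt norm.
  If T^n contracts it, so does the adjoint (T^*)^n, hence also S = (T^*)^n T^n.
  Conversely S is self-adjoint, so repeated Cauchy--Schwarz gives
  \<Parallel>S X\<Parallel>^N \<le> \<Parallel>X\<Parallel>^(N-1) \<Parallel>S^N X\<Parallel> for N = 2^j, while \<Parallel>T^n X\<Parallel>^2 = \<langle>X, S X\<rangle> \<le> \<Parallel>X\<Parallel> \<Parallel>S X\<Parallel>.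
  A contracting power of S therefore makes T^n a contraction of the traceless subspace,
  and T is primitive.
\<close>

section \<open>Hilbert--Schmidt geometry of matrices\<close>

abbreviation positions :: "nat \<Rightarrow> (nat \<times> nat) set" where
  "positions d \<equiv> {..<d} \<times> {..<d}"

definition mat_unit :: "nat \<Rightarrow> nat \<times> nat \<Rightarrow> complex mat" where
  "mat_unit d p = mat d d (\<lambda>q. if q = p then 1 else 0)"

definition hs_inner :: "nat \<Rightarrow> complex mat \<Rightarrow> complex mat \<Rightarrow> complex" where
  "hs_inner d A B = (\<Sum>p\<in>positions d. cnj (A $$ p) * B $$ p)"

definition hs_norm_sq :: "nat \<Rightarrow> complex mat \<Rightarrow> real" where
  "hs_norm_sq d A = (\<Sum>p\<in>positions d. (cmod (A $$ p))\<^sup>2)"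

lemma mat_unit_carrier [simp]: "mat_unit d p \<in> carrier_mat d d"
  by (simp add: mat_unit_def)

lemma mat_unit_dim [simp]: "dim_row (mat_unit d p) = d" "dim_col (mat_unit d p) = d"
  by (simp_all add: mat_unit_def)

lemma ctrace_carrier: "A \<in> carrier_mat d d \<Longrightarrow> ctrace A = (\<Sum>i<d. A $$ (i,i))"
  by (simp add: ctrace_def)

lemma ctrace_lincomb:
  assumes "A \<in> carrier_mat d d" "B \<in> carrier_mat d d"
  shows "ctrace (c \<cdot>\<^sub>m A + B) = c * ctrace A + ctrace B"
  using assms by (simp add: ctrace_def sum_distrib_left sum.distrib)

lemma ctrace_as_sum:
  assumes "A \<in> carrier_mat d d"
  shows "ctrace A = (\<Sum>p\<in>positions d. A $$ p * of_bool (fst p = snd p))"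
proof -
  have "(\<Sum>i<d. A $$ (i,i)) = (\<Sum>i<d. \<Sum>j<d. if i = j then A $$ (i,j) else 0)"
    by simp
  also have "\<dots> = (\<Sum>(i,j)\<in>positions d. if i = j then A $$ (i,j) else 0)"
    by (rule sum.cartesian_product)
  also have "\<dots> = (\<Sum>p\<in>positions d. A $$ p * of_bool (fst p = snd p))"
    by (rule sum.cong) auto
  finally show ?thesis
    using assms by (simp add: ctrace_carrier)
qed

lemma hs_inner_ctrace:
  assumes "A \<in> carrier_mat d d" "B \<in> carrier_mat d d"
  shows "ctrace (cdagger A * B) = hs_inner d A B"
proof -
  have "ctrace (cdagger A * B) = (\<Sum>i<d. \<Sum>k<d. cnj (A $$ (k,i)) * B $$ (k,i))"
    using assms by (simp add: ctrace_def cdagger_def scalar_prod_def atLeast0LessThan)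
  also have "\<dots> = (\<Sum>k<d. \<Sum>i<d. cnj (A $$ (k,i)) * B $$ (k,i))"
    by (rule sum.swap)
  also have "\<dots> = (\<Sum>(k,i)\<in>positions d. cnj (A $$ (k,i)) * B $$ (k,i))"
    by (rule sum.cartesian_product)
  also have "\<dots> = hs_inner d A B"
    unfolding hs_inner_def by (rule sum.cong) auto
  finally show ?thesis .
qed

lemma hs_inner_mat_unit:
  assumes "p \<in> positions d"
  shows "hs_inner d (mat_unit d p) Z = Z $$ p"
proof -
  have "hs_inner d (mat_unit d p) Z = (\<Sum>q\<in>positions d. if q = p then Z $$ q else 0)"
    unfolding hs_inner_def by (rule sum.cong) (auto simp: mat_unit_def)
  also have "\<dots> = Z $$ p"
    using assms by simp
  finally show ?thesis .
qed

lemma hs_inner_one: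
  assumes "Z \<in> carrier_mat d d"
  shows "hs_inner d (1\<^sub>m d) Z = ctrace Z"
  unfolding ctrace_as_sum[OF assms] hs_inner_def by (rule sum.cong) auto

lemma hs_inner_lincomb_right:
  assumes "B \<in> carrier_mat d d" "C \<in> carrier_mat d d"
  shows "hs_inner d A (c \<cdot>\<^sub>m B + C) = c * hs_inner d A B + hs_inner d A C"
  unfolding hs_inner_def sum_distrib_left sum.distrib[symmetric]
  using assms by (intro sum.cong) (auto simp: algebra_simps)

lemma hs_inner_cnj_commute: "hs_inner d A B = cnj (hs_inner d B A)"
  unfolding hs_inner_def cnj_sum by (simp add: mult.commute)

lemma hs_inner_self: "hs_inner d A A = complex_of_real (hs_norm_sq d A)"
  unfolding hs_inner_def hs_norm_sq_def of_real_sum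
  by (intro sum.cong) (simp_all only: complex_norm_square mult.commute)

lemma hs_norm_sq_nonneg: "hs_norm_sq d A \<ge> 0"
  unfolding hs_norm_sq_def by (intro sum_nonneg) auto

lemma norm_hs_inner_self: "cmod (hs_inner d A A) = hs_norm_sq d A"
  by (simp add: hs_inner_self hs_norm_sq_nonneg)

lemma cmod_sum_mult_square_le:
  "(cmod (\<Sum>l\<in>I. a l * b l))\<^sup>2 \<le> (\<Sum>l\<in>I. (cmod (a l))\<^sup>2) * (\<Sum>l\<in>I. (cmod (b l))\<^sup>2)"
proof -
  have "cmod (\<Sum>l\<in>I. a l * b l) \<le> (\<Sum>l\<in>I. cmod (a l) * cmod (b l))"
    using norm_sum[of "\<lambda>l. a l * b l" I] by (simp add: norm_mult)
  then have "(cmod (\<Sum>l\<in>I. a l * b l))\<^sup>2 \<le> (\<Sum>l\<in>I. cmod (a l) * cmod (b l))\<^sup>2"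
    by (rule power_mono) simp
  also have "\<dots> \<le> (\<Sum>l\<in>I. (cmod (a l))\<^sup>2) * (\<Sum>l\<in>I. (cmod (b l))\<^sup>2)"
    by (rule Cauchy_Schwarz_ineq_sum)
  finally show ?thesis .
qed

lemma hs_inner_Cauchy_Schwarz: "(cmod (hs_inner d A B))\<^sup>2 \<le> hs_norm_sq d A * hs_norm_sq d B"
  unfolding hs_inner_def hs_norm_sq_def
  using cmod_sum_mult_square_le[of "\<lambda>p. cnj (A $$ p)" "\<lambda>p. B $$ p" "positions d"] by simp

lemma tendsto_entry_of_hs_norm_sq:
  assumes lim: "(\<lambda>k. hs_norm_sq d (A k)) \<longlonglongrightarrow> 0" and "i < d" "j < d"
  shows "(\<lambda>k. A k $$ (i,j)) \<longlonglongrightarrow> 0"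
proof -
  have "(cmod (A k $$ (i,j)))\<^sup>2 \<le> hs_norm_sq d (A k)" for k
    unfolding hs_norm_sq_def using assms(2,3) by (intro member_le_sum) auto
  then have bound: "norm (A k $$ (i,j)) \<le> sqrt (hs_norm_sq d (A k))" for k
    by (rule real_le_rsqrt)
  have "(\<lambda>k. norm (A k $$ (i,j))) \<longlonglongrightarrow> 0"
  proof (rule tendsto_sandwich[of "\<lambda>_. 0" _ _ "\<lambda>k. sqrt (hs_norm_sq d (A k))"])
    show "(\<lambda>k. sqrt (hs_norm_sq d (A k))) \<longlonglongrightarrow> 0"
      using tendsto_real_sqrt[OF lim] by simp
  qed (use bound in simp_all)
  then show ?thesis
    by (rule tendsto_norm_zero_cancel)
qed

lemma linear_superop_carrier:
  "linear_superop d L \<Longrightarrow> A \<in> carrier_mat d d \<Longrightarrow> L A \<in> carrier_mat d d"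
  unfolding linear_superop_def by blast

lemma linear_superop_lincomb:
  "linear_superop d L \<Longrightarrow> A \<in> carrier_mat d d \<Longrightarrow> B \<in> carrier_mat d d \<Longrightarrow>
    L (c \<cdot>\<^sub>m A + B) = c \<cdot>\<^sub>m L A + L B"
  unfolding linear_superop_def by blast

lemma linear_superop_zero:
  assumes L: "linear_superop d L"
  shows "L (0\<^sub>m d d) = 0\<^sub>m d d"
proof -
  have car: "L (0\<^sub>m d d) \<in> carrier_mat d d"
    by (rule linear_superop_carrier[OF L zero_carrier_mat])
  have "L (0\<^sub>m d d) = L ((-1) \<cdot>\<^sub>m 0\<^sub>m d d + 0\<^sub>m d d)"
    by simp
  also have "\<dots> = (-1) \<cdot>\<^sub>m L (0\<^sub>m d d) + L (0\<^sub>m d d)"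
    by (rule linear_superop_lincomb[OF L zero_carrier_mat zero_carrier_mat])
  also have "\<dots> = 0\<^sub>m d d"
    using car by (auto intro!: eq_matI)
  finally show ?thesis .
qed

lemma linear_superop_add:
  assumes L: "linear_superop d L" and A: "A \<in> carrier_mat d d" and B: "B \<in> carrier_mat d d"
  shows "L (A + B) = L A + L B"
proof -
  have "1 \<cdot>\<^sub>m A + B = A + B" "1 \<cdot>\<^sub>m L A = L A"
    using A B by (auto intro!: eq_matI)
  then show ?thesis
    using linear_superop_lincomb[OF L A B, of 1] by simp
qed

lemma linear_superop_smult:
  assumes L: "linear_superop d L" and A: "A \<in> carrier_mat d d"
  shows "L (c \<cdot>\<^sub>m A) = c \<cdot>\<^sub>m L A"
  using linear_superop_lincomb[OF L A zero_carrier_mat, of c] A linear_superop_carrier[OF L A]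
  by (simp add: linear_superop_zero[OF L])

lemma linear_superop_comp:
  assumes L: "linear_superop d L" and M: "linear_superop d M"
  shows "linear_superop d (L \<circ> M)"
  unfolding linear_superop_def
proof (intro conjI ballI allI)
  fix A :: "complex mat" assume "A \<in> carrier_mat d d"
  then show "(L \<circ> M) A \<in> carrier_mat d d"
    using linear_superop_carrier[OF L] linear_superop_carrier[OF M] by simp
next
  fix A B :: "complex mat" and c :: complex
  assume A: "A \<in> carrier_mat d d" and B: "B \<in> carrier_mat d d"
  show "(L \<circ> M) (c \<cdot>\<^sub>m A + B) = c \<cdot>\<^sub>m (L \<circ> M) A + (L \<circ> M) B"
    using linear_superop_lincomb[OF M A B] linear_superop_lincomb[OF L]
      linear_superop_carrier[OF M A] linear_superop_carrier[OF M B] by simp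
qed

lemma linear_superop_funpow:
  assumes "linear_superop d L"
  shows "linear_superop d (L ^^ k)"
proof (induction k)
  case 0
  show ?case by (simp add: linear_superop_def)
next
  case (Suc k)
  then show ?case
    using linear_superop_comp[OF assms Suc.IH] by (simp only: funpow.simps)
qed

lemma funpow_fixpoint: "L X = X \<Longrightarrow> (L ^^ k) X = X"
  by (induction k) auto

lemma linear_superop_expansion:
  assumes L: "linear_superop d L" and X: "X \<in> carrier_mat d d" and ij: "i < d" "j < d"
  shows "L X $$ (i,j) = (\<Sum>p\<in>positions d. X $$ p * L (mat_unit d p) $$ (i,j))"
proof -
  define restr where "restr F = mat d d (\<lambda>p. if p \<in> F then X $$ p else 0)" for F
  have restr_carrier: "restr F \<in> carrier_mat d d" for F
    by (simp add: restr_def)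
  have "L (restr F) $$ (i,j) = (\<Sum>p\<in>F. X $$ p * L (mat_unit d p) $$ (i,j))" if "finite F" for F
    using that
  proof (induction F rule: finite_induct)
    case empty
    have "restr {} = 0\<^sub>m d d"
      by (auto simp: restr_def)
    then show ?case
      using linear_superop_zero[OF L] ij by simp
  next
    case (insert p F)
    have "restr (insert p F) = X $$ p \<cdot>\<^sub>m mat_unit d p + restr F"
      using insert.hyps(2) by (auto simp: restr_def mat_unit_def intro!: eq_matI)
    then show ?case
      using insert ij linear_superop_lincomb[OF L mat_unit_carrier restr_carrier]
        linear_superop_carrier[OF L restr_carrier[of F]] linear_superop_carrier[OF L mat_unit_carrier[of d p]]
      by simp
  qed
  moreover have "restr (positions d) = X"
    using X by (auto simp: restr_def intro!: eq_matI)
  ultimately show ?thesis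
    by (metis finite_SigmaI finite_lessThan)
qed

section \<open>Primitivity as decay of traceless matrices\<close>

definition traceless :: "nat \<Rightarrow> complex mat \<Rightarrow> bool" where
  "traceless d X \<longleftrightarrow> X \<in> carrier_mat d d \<and> ctrace X = 0"

definition traceless_part :: "nat \<Rightarrow> complex mat \<Rightarrow> complex mat" where
  "traceless_part d A = A + (- ctrace A / of_nat d) \<cdot>\<^sub>m 1\<^sub>m d"

lemma traceless_part_carrier [simp]: "A \<in> carrier_mat d d \<Longrightarrow> traceless_part d A \<in> carrier_mat d d"
  by (simp add: traceless_part_def)

lemma ctrace_add_smult_one:
  "A \<in> carrier_mat d d \<Longrightarrow> ctrace (A + c \<cdot>\<^sub>m 1\<^sub>m d) = ctrace A + of_nat d * c"
  by (simp add: ctrace_def sum.distrib)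

lemma traceless_traceless_part:
  assumes A: "A \<in> carrier_mat d d"
  shows "traceless d (traceless_part d A)"
proof (cases "d = 0")
  case True
  then show ?thesis
    using A by (simp add: traceless_def ctrace_def traceless_part_def)
next
  case False
  then show ?thesis
    using A by (simp add: traceless_def traceless_part_def ctrace_add_smult_one)
qed

lemma traceless_part_traceless: "traceless d X \<Longrightarrow> traceless_part d X = X"
  by (auto simp: traceless_def traceless_part_def intro!: eq_matI)

lemma linear_superop_traceless_part: "linear_superop d (traceless_part d)"
  unfolding linear_superop_def
proof (intro conjI ballI allI)
  fix A B :: "complex mat" and c :: complex
  assume A: "A \<in> carrier_mat d d" and B: "B \<in> carrier_mat d d"
  then show "traceless_part d (c \<cdot>\<^sub>m A + B) = c \<cdot>\<^sub>m traceless_part d A + traceless_part d B"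
    by (auto simp: traceless_part_def ctrace_lincomb algebra_simps diff_divide_distrib
        add_divide_distrib intro!: eq_matI)
qed simp

lemma traceless_funpow:
  assumes L: "\<And>X. traceless d X \<Longrightarrow> traceless d (L X)" and X: "traceless d X"
  shows "traceless d ((L ^^ k) X)"
  using X by (induction k) (auto intro: L)

lemma traceless_trace_preserving:
  "linear_superop d L \<Longrightarrow> trace_preserving d L \<Longrightarrow> traceless d X \<Longrightarrow> traceless d (L X)"
  by (simp add: traceless_def trace_preserving_def linear_superop_carrier)

lemma funpow_unital_split:
  assumes S: "linear_superop d S" and S1: "S (1\<^sub>m d) = 1\<^sub>m d" and A: "A \<in> carrier_mat d d"
  shows "(S ^^ k) A = (S ^^ k) (traceless_part d A) + (ctrace A / of_nat d) \<cdot>\<^sub>m 1\<^sub>m d"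
proof -
  have Sk: "linear_superop d (S ^^ k)"
    by (rule linear_superop_funpow[OF S])
  have "A = traceless_part d A + (ctrace A / of_nat d) \<cdot>\<^sub>m 1\<^sub>m d"
    using A by (auto simp: traceless_part_def intro!: eq_matI)
  then have "(S ^^ k) A = (S ^^ k) (traceless_part d A + (ctrace A / of_nat d) \<cdot>\<^sub>m 1\<^sub>m d)"
    by simp
  also have "\<dots> = (S ^^ k) (traceless_part d A) + (ctrace A / of_nat d) \<cdot>\<^sub>m (S ^^ k) (1\<^sub>m d)"
    using A by (simp add: linear_superop_add[OF Sk] linear_superop_smult[OF Sk])
  finally show ?thesis
    by (simp add: funpow_fixpoint[of S, OF S1])
qed

lemma funpow_traceless_expansion:
  assumes S: "linear_superop d S" and X: "traceless d X" and ij: "i < d" "j < d"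
  shows "(S ^^ k) X $$ (i,j)
    = (\<Sum>p\<in>positions d. X $$ p * (S ^^ k) (traceless_part d (mat_unit d p)) $$ (i,j))"
proof -
  have "(S ^^ k) X = ((S ^^ k) \<circ> traceless_part d) X"
    using traceless_part_traceless[OF X] by simp
  then show ?thesis
    using linear_superop_expansion[OF linear_superop_comp[OF linear_superop_funpow[OF S]
        linear_superop_traceless_part] _ ij] X
    by (simp add: traceless_def)
qed

definition vanishing :: "nat \<Rightarrow> (complex mat \<Rightarrow> complex mat) \<Rightarrow> complex mat \<Rightarrow> bool" where
  "vanishing d S Z \<longleftrightarrow> (\<forall>i<d. \<forall>j<d. (\<lambda>k. (S ^^ k) Z $$ (i,j)) \<longlonglongrightarrow> 0)"

definition mixing :: "nat \<Rightarrow> (complex mat \<Rightarrow> complex mat) \<Rightarrow> bool" where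
  "mixing d S \<longleftrightarrow> (\<forall>X. traceless d X \<longrightarrow> vanishing d S X)"

lemma vanishing_add:
  assumes S: "linear_superop d S" and A: "A \<in> carrier_mat d d" and B: "B \<in> carrier_mat d d"
    and "vanishing d S A" "vanishing d S B"
  shows "vanishing d S (A + B)"
  unfolding vanishing_def
proof (intro allI impI)
  fix i j assume ij: "i < d" "j < d"
  have "(S ^^ k) (A + B) $$ (i,j) = (S ^^ k) A $$ (i,j) + (S ^^ k) B $$ (i,j)" for k
    using ij linear_superop_add[OF linear_superop_funpow[OF S] A B, of k]
      linear_superop_carrier[OF linear_superop_funpow[OF S] A, of k]
      linear_superop_carrier[OF linear_superop_funpow[OF S] B, of k]
    by simp
  then show "(\<lambda>k. (S ^^ k) (A + B) $$ (i,j)) \<longlonglongrightarrow> 0"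
    using assms(4,5) ij unfolding vanishing_def by (simp add: tendsto_add_zero)
qed

lemma vanishing_smult:
  assumes S: "linear_superop d S" and A: "A \<in> carrier_mat d d" and "vanishing d S A"
  shows "vanishing d S (c \<cdot>\<^sub>m A)"
  unfolding vanishing_def
proof (intro allI impI)
  fix i j assume ij: "i < d" "j < d"
  have "(S ^^ k) (c \<cdot>\<^sub>m A) $$ (i,j) = c * (S ^^ k) A $$ (i,j)" for k
    using ij linear_superop_smult[OF linear_superop_funpow[OF S] A, of k]
      linear_superop_carrier[OF linear_superop_funpow[OF S] A, of k]
    by simp
  then show "(\<lambda>k. (S ^^ k) (c \<cdot>\<^sub>m A) $$ (i,j)) \<longlonglongrightarrow> 0"
    using assms(3) ij unfolding vanishing_def by (simp add: tendsto_mult_right_zero)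
qed

lemma mixing_imp_primitive:
  assumes S: "linear_superop d S" and S1: "S (1\<^sub>m d) = 1\<^sub>m d" and mix: "mixing d S"
  shows "primitive d S"
  unfolding primitive_def
proof (intro allI impI)
  fix \<rho> i j assume \<rho>: "density d \<rho>" and ij: "i < d" "j < d"
  then have car: "\<rho> \<in> carrier_mat d d" and tr: "ctrace \<rho> = 1"
    by (auto simp: density_def psd_def)
  have "vanishing d S (traceless_part d \<rho>)"
    using mix traceless_traceless_part[OF car] by (simp add: mixing_def)
  then have "(\<lambda>k. (S ^^ k) (traceless_part d \<rho>) $$ (i,j) + (if i = j then 1 / of_nat d else 0))
      \<longlonglongrightarrow> 0 + (if i = j then 1 / of_nat d else 0)"
    using ij by (intro tendsto_add) (auto simp: vanishing_def)
  moreover have "(S ^^ k) \<rho> $$ (i,j)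
      = (S ^^ k) (traceless_part d \<rho>) $$ (i,j) + (if i = j then 1 / of_nat d else 0)" for k
    using funpow_unital_split[OF S S1 car, of k] ij car tr
      linear_superop_carrier[OF linear_superop_funpow[OF S] traceless_part_carrier[OF car], of k]
    by simp
  ultimately show "(\<lambda>k. (S ^^ k) \<rho> $$ (i,j)) \<longlonglongrightarrow> (if i = j then 1 / of_nat d else 0)"
    by simp
qed

definition pure_state :: "nat \<Rightarrow> (nat \<Rightarrow> complex) \<Rightarrow> complex mat" where
  "pure_state d v = mat d d (\<lambda>(i,j). v i * cnj (v j))"

definition superposition :: "nat \<Rightarrow> nat \<Rightarrow> complex \<Rightarrow> nat \<Rightarrow> complex" where
  "superposition a b x t = of_real (sqrt (1/2)) * (of_bool (t = a) + x * of_bool (t = b))"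

lemma pure_state_carrier [simp]: "pure_state d v \<in> carrier_mat d d"
  by (simp add: pure_state_def)

lemma density_pure_state:
  assumes norm1: "(\<Sum>i<d. (cmod (v i))\<^sup>2) = 1"
  shows "density d (pure_state d v)"
proof -
  have herm: "cdagger (pure_state d v) = pure_state d v"
    unfolding cdagger_def pure_state_def by (intro eq_matI) (auto simp: mult.commute)
  have "Re (\<Sum>i<d. \<Sum>j<d. cnj (w i) * pure_state d v $$ (i,j) * w j) \<ge> 0" for w
  proof -
    define z where "z = (\<Sum>i<d. cnj (w i) * v i)"
    have "(\<Sum>i<d. \<Sum>j<d. cnj (w i) * pure_state d v $$ (i,j) * w j)
        = (\<Sum>i<d. \<Sum>j<d. (cnj (w i) * v i) * (cnj (v j) * w j))"
      unfolding pure_state_def by (intro sum.cong refl) (simp add: ac_simps)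
    also have "\<dots> = z * cnj z"
      unfolding z_def cnj_sum sum_product by (simp add: ac_simps)
    also have "\<dots> = complex_of_real ((cmod z)\<^sup>2)"
      by (rule complex_norm_square[symmetric])
    finally show ?thesis
      by simp
  qed
  moreover have "ctrace (pure_state d v) = 1"
  proof -
    have "ctrace (pure_state d v) = (\<Sum>i<d. complex_of_real ((cmod (v i))\<^sup>2))"
      unfolding complex_norm_square by (simp add: ctrace_def pure_state_def)
    also have "\<dots> = complex_of_real (\<Sum>i<d. (cmod (v i))\<^sup>2)"
      by (rule of_real_sum[symmetric])
    also have "\<dots> = 1"
      using norm1 by simp
    finally show ?thesis .
  qed
  ultimately show ?thesis
    using herm unfolding density_def psd_def by simp
qed

lemma density_superposition:
  assumes ab: "a \<noteq> b" "a < d" "b < d" and x: "cmod x = 1"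
  shows "density d (pure_state d (superposition a b x))"
proof (rule density_pure_state)
  have "(\<Sum>t<d. (cmod (superposition a b x t))\<^sup>2) = (\<Sum>t\<in>{a,b}. (cmod (superposition a b x t))\<^sup>2)"
    using ab by (intro sum.mono_neutral_right) (auto simp: superposition_def)
  also have "\<dots> = 1"
    using ab x by (simp add: superposition_def norm_mult)
  finally show "(\<Sum>t<d. (cmod (superposition a b x t))\<^sup>2) = 1" .
qed

lemma mat_unit_diag: "mat_unit d (a,a) = pure_state d (\<lambda>t. of_bool (t = a))"
  by (auto simp: mat_unit_def pure_state_def intro!: eq_matI)

lemma density_mat_unit_diag: "a < d \<Longrightarrow> density d (mat_unit d (a,a))"
proof -
  assume a: "a < d"
  have "(\<Sum>t<d. (cmod (of_bool (t = a) :: complex))\<^sup>2) = (\<Sum>t<d. if t = a then 1 else 0)"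
    by (rule sum.cong) auto
  also have "\<dots> = 1"
    using a by simp
  finally show ?thesis
    unfolding mat_unit_diag by (rule density_pure_state)
qed

lemma mat_unit_offdiag:
  assumes "a \<noteq> b"
  shows "mat_unit d (a,b) = pure_state d (superposition a b 1) + \<i> \<cdot>\<^sub>m pure_state d (superposition a b \<i>)
    + (- (1 + \<i>) / 2) \<cdot>\<^sub>m (mat_unit d (a,a) + mat_unit d (b,b))"
proof (rule eq_matI)
  have s2: "complex_of_real (sqrt (1/2)) * complex_of_real (sqrt (1/2)) = 1/2"
    by (simp flip: of_real_mult)
  fix i j assume "i < dim_row (pure_state d (superposition a b 1) + \<i> \<cdot>\<^sub>m pure_state d (superposition a b \<i>)
    + (- (1 + \<i>) / 2) \<cdot>\<^sub>m (mat_unit d (a,a) + mat_unit d (b,b)))"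
    "j < dim_col (pure_state d (superposition a b 1) + \<i> \<cdot>\<^sub>m pure_state d (superposition a b \<i>)
    + (- (1 + \<i>) / 2) \<cdot>\<^sub>m (mat_unit d (a,a) + mat_unit d (b,b)))"
  then have ij: "i < d" "j < d"
    by (simp_all add: pure_state_def)
  show "mat_unit d (a,b) $$ (i,j) = (pure_state d (superposition a b 1) + \<i> \<cdot>\<^sub>m pure_state d (superposition a b \<i>)
    + (- (1 + \<i>) / 2) \<cdot>\<^sub>m (mat_unit d (a,a) + mat_unit d (b,b))) $$ (i,j)"
    using ij assms
    by (cases "i = a"; cases "i = b"; cases "j = a"; cases "j = b")
      (simp_all add: mat_unit_def pure_state_def superposition_def algebra_simps s2 field_simps)
qed (simp_all add: pure_state_def)

lemma primitive_imp_vanishing_traceless_part: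
  assumes S: "linear_superop d S" and S1: "S (1\<^sub>m d) = 1\<^sub>m d" and prim: "primitive d S"
    and \<rho>: "density d \<rho>"
  shows "vanishing d S (traceless_part d \<rho>)"
  unfolding vanishing_def
proof (intro allI impI)
  fix i j assume ij: "i < d" "j < d"
  have car: "\<rho> \<in> carrier_mat d d" and tr: "ctrace \<rho> = 1"
    using \<rho> by (auto simp: density_def psd_def)
  let ?\<delta> = "if i = j then 1 / of_nat d else (0::complex)"
  have "(S ^^ k) (traceless_part d \<rho>) $$ (i,j) = (S ^^ k) \<rho> $$ (i,j) - ?\<delta>" for k
    using funpow_unital_split[OF S S1 car, of k] ij car tr
      linear_superop_carrier[OF linear_superop_funpow[OF S] traceless_part_carrier[OF car], of k]
    by simp
  moreover have "(\<lambda>k. (S ^^ k) \<rho> $$ (i,j) - ?\<delta>) \<longlonglongrightarrow> ?\<delta> - ?\<delta>"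
    using prim \<rho> ij unfolding primitive_def by (intro tendsto_diff) auto
  ultimately show "(\<lambda>k. (S ^^ k) (traceless_part d \<rho>) $$ (i,j)) \<longlonglongrightarrow> 0"
    by simp
qed

lemma primitive_imp_mixing:
  assumes S: "linear_superop d S" and S1: "S (1\<^sub>m d) = 1\<^sub>m d" and prim: "primitive d S"
  shows "mixing d S"
proof -
  note vanishing_density = primitive_imp_vanishing_traceless_part[OF S S1 prim]
  have units: "vanishing d S (traceless_part d (mat_unit d (a,b)))" if ab: "a < d" "b < d" for a b
  proof (cases "a = b")
    case True
    then show ?thesis
      using vanishing_density density_mat_unit_diag ab by simp
  next
    case False
    let ?P = "\<lambda>x. traceless_part d (pure_state d (superposition a b x))"
    let ?c = "- (1 + \<i>) / 2"
    have "traceless_part d (mat_unit d (a,b)) = ?P 1 + \<i> \<cdot>\<^sub>m ?P \<i>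
        + ?c \<cdot>\<^sub>m (traceless_part d (mat_unit d (a,a)) + traceless_part d (mat_unit d (b,b)))"
      unfolding mat_unit_offdiag[OF False]
      by (simp add: linear_superop_add[OF linear_superop_traceless_part]
          linear_superop_smult[OF linear_superop_traceless_part])
    moreover have "vanishing d S (?P x)" if "cmod x = 1" for x
      by (rule vanishing_density[OF density_superposition[OF False ab that]])
    moreover have "vanishing d S (traceless_part d (mat_unit d (c,c)))" if "c < d" for c
      by (rule vanishing_density[OF density_mat_unit_diag[OF that]])
    ultimately show ?thesis
      using ab by (simp add: vanishing_add[OF S] vanishing_smult[OF S])
  qed
  show ?thesis
    unfolding mixing_def vanishing_def
  proof (intro allI impI)
    fix X i j assume X: "traceless d X" and ij: "i < d" "j < d"
    have "(\<lambda>k. \<Sum>p\<in>positions d. X $$ p * (S ^^ k) (traceless_part d (mat_unit d p)) $$ (i,j))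
        \<longlonglongrightarrow> (\<Sum>p\<in>positions d. X $$ p * 0)"
      using units ij by (intro tendsto_sum tendsto_mult_left) (auto simp: vanishing_def)
    then show "(\<lambda>k. (S ^^ k) X $$ (i,j)) \<longlonglongrightarrow> 0"
      by (simp add: funpow_traceless_expansion[OF S X ij])
  qed
qed

lemma primitive_iff_mixing:
  assumes "linear_superop d S" and "S (1\<^sub>m d) = 1\<^sub>m d"
  shows "primitive d S \<longleftrightarrow> mixing d S"
  using primitive_imp_mixing[OF assms] mixing_imp_primitive[OF assms] by blast

section \<open>Contraction of the traceless subspace\<close>

lemma mixing_imp_eventually_contraction:
  assumes S: "linear_superop d S" and mix: "mixing d S" and \<epsilon>: "\<epsilon> > 0"
  shows "\<forall>\<^sub>F k in sequentially. \<forall>X. traceless d X \<longrightarrow>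
    hs_norm_sq d ((S ^^ k) X) \<le> \<epsilon> * hs_norm_sq d X"
proof -
  define g where "g k p q = (S ^^ k) (traceless_part d (mat_unit d p)) $$ q" for k p q
  define e where "e k = (\<Sum>q\<in>positions d. \<Sum>p\<in>positions d. (cmod (g k p q))\<^sup>2)" for k
  have "e \<longlonglongrightarrow> (\<Sum>q\<in>positions d. \<Sum>p\<in>positions d. (cmod 0)\<^sup>2)"
    unfolding e_def g_def
    using mix traceless_traceless_part[OF mat_unit_carrier]
    by (intro tendsto_sum tendsto_power tendsto_norm) (auto simp: mixing_def vanishing_def)
  then have ev: "\<forall>\<^sub>F k in sequentially. e k < \<epsilon>"
    using \<epsilon> by (simp add: order_tendstoD)
  have bound: "hs_norm_sq d ((S ^^ k) X) \<le> e k * hs_norm_sq d X" if X: "traceless d X" for k X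
  proof -
    have "hs_norm_sq d ((S ^^ k) X)
        = (\<Sum>q\<in>positions d. (cmod (\<Sum>p\<in>positions d. X $$ p * g k p q))\<^sup>2)"
      unfolding hs_norm_sq_def g_def
      by (intro sum.cong refl) (clarsimp simp: funpow_traceless_expansion[OF S X])
    also have "\<dots> \<le> (\<Sum>q\<in>positions d. hs_norm_sq d X * (\<Sum>p\<in>positions d. (cmod (g k p q))\<^sup>2))"
      unfolding hs_norm_sq_def by (intro sum_mono cmod_sum_mult_square_le)
    also have "\<dots> = e k * hs_norm_sq d X"
      unfolding e_def by (simp add: sum_distrib_left ac_simps)
    finally show ?thesis .
  qed
  show ?thesis
    using ev
  proof (rule eventually_mono)
    fix k assume ek: "e k < \<epsilon>"
    show "\<forall>X. traceless d X \<longrightarrow> hs_norm_sq d ((S ^^ k) X) \<le> \<epsilon> * hs_norm_sq d X"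
    proof (intro allI impI)
      fix X assume X: "traceless d X"
      have "hs_norm_sq d ((S ^^ k) X) \<le> e k * hs_norm_sq d X"
        by (rule bound[OF X])
      also have "\<dots> \<le> \<epsilon> * hs_norm_sq d X"
        using ek by (intro mult_right_mono) (auto simp: hs_norm_sq_nonneg)
      finally show "hs_norm_sq d ((S ^^ k) X) \<le> \<epsilon> * hs_norm_sq d X" .
    qed
  qed
qed

lemma funpow_contraction_iterate:
  assumes L: "\<And>X. traceless d X \<Longrightarrow> traceless d (L X)" and c: "0 \<le> c"
    and contr: "\<And>X. traceless d X \<Longrightarrow> hs_norm_sq d ((L ^^ n) X) \<le> c * hs_norm_sq d X"
    and Y: "traceless d Y"
  shows "hs_norm_sq d ((L ^^ (n * q)) Y) \<le> c ^ q * hs_norm_sq d Y"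
proof (induction q)
  case (Suc q)
  have "hs_norm_sq d ((L ^^ (n * Suc q)) Y) = hs_norm_sq d ((L ^^ n) ((L ^^ (n * q)) Y))"
    by (simp add: funpow_add)
  also have "\<dots> \<le> c * hs_norm_sq d ((L ^^ (n * q)) Y)"
    by (rule contr[OF traceless_funpow[OF L Y]])
  also have "\<dots> \<le> c * (c ^ q * hs_norm_sq d Y)"
    using Suc c by (rule mult_left_mono)
  finally show ?case
    by simp
qed simp

lemma funpow_contraction_bound:
  assumes L: "\<And>X. traceless d X \<Longrightarrow> traceless d (L X)" and c: "0 \<le> c"
    and contr: "\<And>X. traceless d X \<Longrightarrow> hs_norm_sq d ((L ^^ n) X) \<le> c * hs_norm_sq d X"
    and X: "traceless d X" and n: "n > 0"
  shows "hs_norm_sq d ((L ^^ k) X) \<le> c ^ (k div n) * (\<Sum>r<n. hs_norm_sq d ((L ^^ r) X))"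
proof -
  have "(L ^^ k) X = (L ^^ (n * (k div n) + k mod n)) X"
    by (simp only: mult_div_mod_eq)
  also have "\<dots> = (L ^^ (n * (k div n))) ((L ^^ (k mod n)) X)"
    by (simp only: funpow_add comp_apply)
  finally have split: "(L ^^ k) X = (L ^^ (n * (k div n))) ((L ^^ (k mod n)) X)" .
  have "hs_norm_sq d ((L ^^ k) X) \<le> c ^ (k div n) * hs_norm_sq d ((L ^^ (k mod n)) X)"
    unfolding split using funpow_contraction_iterate[OF L c contr traceless_funpow[OF L X]] by simp
  also have "\<dots> \<le> c ^ (k div n) * (\<Sum>r<n. hs_norm_sq d ((L ^^ r) X))"
    using n c by (intro mult_left_mono member_le_sum) (auto simp: hs_norm_sq_nonneg)
  finally show ?thesis .
qed

lemma power_contraction_decay: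
  assumes L: "\<And>X. traceless d X \<Longrightarrow> traceless d (L X)" and c: "0 \<le> c" "c < 1"
    and contr: "\<And>X. traceless d X \<Longrightarrow> hs_norm_sq d ((L ^^ n) X) \<le> c * hs_norm_sq d X"
    and X: "traceless d X"
  shows "(\<lambda>k. hs_norm_sq d ((L ^^ k) X)) \<longlonglongrightarrow> 0"
proof (cases "n = 0")
  case True
  have "hs_norm_sq d ((L ^^ k) X) = 0" for k
  proof -
    have "hs_norm_sq d ((L ^^ k) X) \<le> c * hs_norm_sq d ((L ^^ k) X)"
      using contr[OF traceless_funpow[OF L X]] True by simp
    then show ?thesis
      using c hs_norm_sq_nonneg[of d "(L ^^ k) X"] by (simp add: mult_le_cancel_right1)
  qed
  then show ?thesis
    by simp
next
  case False
  define M where "M = (\<Sum>r<n. hs_norm_sq d ((L ^^ r) X))"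
  have "(\<lambda>k. c ^ (k div n)) \<longlonglongrightarrow> 0"
    using filterlim_compose[OF LIMSEQ_power_zero filterlim_at_top_div_const_nat, of c n] False c
    by simp
  then have lim: "(\<lambda>k. c ^ (k div n) * M) \<longlonglongrightarrow> 0"
    by (rule tendsto_mult_left_zero)
  show ?thesis
  proof (rule tendsto_sandwich[of "\<lambda>_. 0" _ _ "\<lambda>k. c ^ (k div n) * M"])
    show "(\<lambda>k. c ^ (k div n) * M) \<longlonglongrightarrow> 0"
      by (rule lim)
  qed (use funpow_contraction_bound[OF L c(1) contr X] False in \<open>simp_all add: M_def hs_norm_sq_nonneg\<close>)
qed

lemma power_contraction_imp_mixing:
  assumes L: "\<And>X. traceless d X \<Longrightarrow> traceless d (L X)" and c: "0 \<le> c" "c < 1"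
    and contr: "\<And>X. traceless d X \<Longrightarrow> hs_norm_sq d ((L ^^ n) X) \<le> c * hs_norm_sq d X"
  shows "mixing d L"
  unfolding mixing_def vanishing_def
proof (intro allI impI)
  fix X i j assume "traceless d X" "i < d" "j < d"
  then show "(\<lambda>k. (L ^^ k) X $$ (i,j)) \<longlonglongrightarrow> 0"
    by (intro tendsto_entry_of_hs_norm_sq[of d "\<lambda>k. (L ^^ k) X"] power_contraction_decay[OF L c contr])
qed

lemma hs_norm_sq_log_convex:
  assumes car: "\<And>A. A \<in> carrier_mat d d \<Longrightarrow> S A \<in> carrier_mat d d"
    and self_adj: "\<And>A B. A \<in> carrier_mat d d \<Longrightarrow> B \<in> carrier_mat d d \<Longrightarrow>
      hs_inner d A (S B) = hs_inner d (S A) B"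
    and X: "X \<in> carrier_mat d d"
  shows "hs_norm_sq d (S X) ^ (2^j) \<le> hs_norm_sq d X ^ (2^j - 1) * hs_norm_sq d ((S ^^ (2^j)) X)"
  using car self_adj
proof (induction j arbitrary: S)
  case (Suc j)
  have SX: "S X \<in> carrier_mat d d"
    using Suc.prems(1) X .
  have "hs_norm_sq d (S X) = cmod (hs_inner d X (S (S X)))"
    using Suc.prems(2)[OF X SX] norm_hs_inner_self[of d "S X"] by simp
  then have sq: "hs_norm_sq d (S X) ^ 2 \<le> hs_norm_sq d X * hs_norm_sq d (S (S X))"
    using hs_inner_Cauchy_Schwarz by simp
  have IH: "hs_norm_sq d ((S \<circ> S) X) ^ (2^j) \<le> hs_norm_sq d X ^ (2^j - 1) * hs_norm_sq d (((S \<circ> S) ^^ (2^j)) X)"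
    using Suc.prems by (intro Suc.IH) simp_all
  have "S \<circ> S = S ^^ 2"
    by (simp add: numeral_2_eq_2)
  then have "(S \<circ> S) ^^ (2^j) = S ^^ (2 ^ Suc j)"
    by (simp add: funpow_mult)
  have "hs_norm_sq d (S X) ^ (2 ^ Suc j) = (hs_norm_sq d (S X) ^ 2) ^ (2^j)"
    by (simp add: power_mult)
  also have "\<dots> \<le> (hs_norm_sq d X * hs_norm_sq d ((S \<circ> S) X)) ^ (2^j)"
    using sq by (intro power_mono) auto
  also have "\<dots> = hs_norm_sq d X ^ (2^j) * hs_norm_sq d ((S \<circ> S) X) ^ (2^j)"
    by (simp add: power_mult_distrib)
  also have "\<dots> \<le> hs_norm_sq d X ^ (2^j) * (hs_norm_sq d X ^ (2^j - 1) * hs_norm_sq d (((S \<circ> S) ^^ (2^j)) X))"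
    using IH hs_norm_sq_nonneg by (intro mult_left_mono) auto
  also have "\<dots> = hs_norm_sq d X ^ (2^j + (2^j - 1)) * hs_norm_sq d ((S ^^ (2 ^ Suc j)) X)"
    unfolding \<open>(S \<circ> S) ^^ (2^j) = S ^^ (2 ^ Suc j)\<close> power_add by (simp add: mult.assoc)
  also have "2^j + (2^j - 1) = (2 ^ Suc j - 1 :: nat)"
    by simp
  finally show ?case .
qed simp

lemma self_adjoint_contraction_of_power:
  assumes car: "\<And>A. A \<in> carrier_mat d d \<Longrightarrow> S A \<in> carrier_mat d d"
    and self_adj: "\<And>A B. A \<in> carrier_mat d d \<Longrightarrow> B \<in> carrier_mat d d \<Longrightarrow>
      hs_inner d A (S B) = hs_inner d (S A) B"
    and X: "X \<in> carrier_mat d d"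
    and half: "hs_norm_sq d ((S ^^ (2^j)) X) \<le> hs_norm_sq d X / 2"
  shows "hs_norm_sq d (S X) ^ (2^j) \<le> hs_norm_sq d X ^ (2^j) / 2"
proof -
  have "hs_norm_sq d (S X) ^ (2^j) \<le> hs_norm_sq d X ^ (2^j - 1) * hs_norm_sq d ((S ^^ (2^j)) X)"
    by (rule hs_norm_sq_log_convex[OF car self_adj X])
  also have "\<dots> \<le> hs_norm_sq d X ^ (2^j - 1) * (hs_norm_sq d X / 2)"
    using half by (intro mult_left_mono) (auto simp: hs_norm_sq_nonneg)
  also have "\<dots> = hs_norm_sq d X ^ Suc (2^j - 1) / 2"
    unfolding power_Suc by simp
  also have "Suc (2^j - 1) = 2^j"
    by simp
  finally show ?thesis .
qed

lemma le_root_half_mult: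
  fixes a b :: real
  assumes "0 \<le> a" "0 \<le> b" "0 < m" and pow: "a ^ m \<le> b ^ m / 2"
  shows "a \<le> root m (1/2) * b"
proof -
  have "(root m (1/2) * b) ^ m = b ^ m / 2"
    using assms(3) by (simp add: power_mult_distrib real_root_pow_pos2)
  then have "a ^ m \<le> (root m (1/2) * b) ^ m"
    using pow by simp
  moreover have "0 \<le> root m (1/2) * b"
    using assms(2) by (simp add: real_root_ge_zero)
  ultimately show ?thesis
    using power_mono_iff assms(1,3) by blast
qed

section \<open>Hilbert--Schmidt adjoints\<close>

context
  fixes d :: nat and T Tadj :: "complex mat \<Rightarrow> complex mat"
  assumes adj: "is_hs_adjoint d T Tadj" and linT: "linear_superop d T"
begin

lemma adjoint_carrier: "A \<in> carrier_mat d d \<Longrightarrow> Tadj A \<in> carrier_mat d d"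
  using adj unfolding is_hs_adjoint_def by blast

lemma hs_inner_adjoint:
  assumes "A \<in> carrier_mat d d" "B \<in> carrier_mat d d"
  shows "hs_inner d A (T B) = hs_inner d (Tadj A) B"
proof -
  have "ctrace (cdagger A * T B) = ctrace (cdagger (Tadj A) * B)"
    using adj assms unfolding is_hs_adjoint_def by blast
  then show ?thesis
    using assms by (simp add: hs_inner_ctrace linear_superop_carrier[OF linT] adjoint_carrier)
qed

lemma hs_inner_adjoint_funpow:
  assumes "A \<in> carrier_mat d d" "B \<in> carrier_mat d d"
  shows "hs_inner d A ((T ^^ n) B) = hs_inner d ((Tadj ^^ n) A) B"
  using assms(1)
proof (induction n arbitrary: A)
  case (Suc n)
  have TnB: "(T ^^ n) B \<in> carrier_mat d d"
    using linear_superop_carrier[OF linear_superop_funpow[OF linT] assms(2)] .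
  have "hs_inner d A ((T ^^ Suc n) B) = hs_inner d (Tadj A) ((T ^^ n) B)"
    using hs_inner_adjoint[OF Suc.prems TnB] by simp
  also have "\<dots> = hs_inner d ((Tadj ^^ n) (Tadj A)) B"
    using Suc.IH[OF adjoint_carrier[OF Suc.prems]] .
  finally show ?case
    by (simp add: funpow_Suc_right del: funpow.simps)
qed simp

lemma hs_inner_adjoint_funpow':
  assumes "A \<in> carrier_mat d d" "B \<in> carrier_mat d d"
  shows "hs_inner d A ((Tadj ^^ n) B) = hs_inner d ((T ^^ n) A) B"
proof -
  have "hs_inner d A ((Tadj ^^ n) B) = cnj (hs_inner d ((Tadj ^^ n) B) A)"
    by (rule hs_inner_cnj_commute)
  also have "\<dots> = cnj (hs_inner d B ((T ^^ n) A))"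
    using hs_inner_adjoint_funpow[OF assms(2,1)] by simp
  also have "\<dots> = hs_inner d ((T ^^ n) A) B"
    by (rule hs_inner_cnj_commute[symmetric])
  finally show ?thesis .
qed

lemma adjoint_entry:
  assumes Z: "Z \<in> carrier_mat d d" and ij: "i < d" "j < d"
  shows "Tadj Z $$ (i,j) = hs_inner d (T (mat_unit d (i,j))) Z"
proof -
  have "Tadj Z $$ (i,j) = hs_inner d (mat_unit d (i,j)) ((Tadj ^^ 1) Z)"
    using hs_inner_mat_unit[of "(i,j)" d "Tadj Z"] ij by simp
  also have "\<dots> = hs_inner d ((T ^^ 1) (mat_unit d (i,j))) Z"
    by (rule hs_inner_adjoint_funpow'[OF mat_unit_carrier Z])
  finally show ?thesis
    by simp
qed

lemma linear_superop_adjoint: "linear_superop d Tadj"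
  unfolding linear_superop_def
proof (intro conjI ballI allI)
  fix A B :: "complex mat" and c :: complex
  assume A: "A \<in> carrier_mat d d" and B: "B \<in> carrier_mat d d"
  have AB: "c \<cdot>\<^sub>m A + B \<in> carrier_mat d d"
    using A B by simp
  have car: "Tadj (c \<cdot>\<^sub>m A + B) \<in> carrier_mat d d" "Tadj A \<in> carrier_mat d d" "Tadj B \<in> carrier_mat d d"
    using adjoint_carrier A B AB by blast+
  show "Tadj (c \<cdot>\<^sub>m A + B) = c \<cdot>\<^sub>m Tadj A + Tadj B"
  proof (rule eq_matI)
    fix i j assume "i < dim_row (c \<cdot>\<^sub>m Tadj A + Tadj B)" "j < dim_col (c \<cdot>\<^sub>m Tadj A + Tadj B)"
    then have ij: "i < d" "j < d"
      using car by auto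
    have "Tadj (c \<cdot>\<^sub>m A + B) $$ (i,j) = hs_inner d (T (mat_unit d (i,j))) (c \<cdot>\<^sub>m A + B)"
      by (rule adjoint_entry[OF AB ij])
    also have "\<dots> = c * Tadj A $$ (i,j) + Tadj B $$ (i,j)"
      unfolding hs_inner_lincomb_right[OF A B] adjoint_entry[OF A ij] adjoint_entry[OF B ij] ..
    also have "\<dots> = (c \<cdot>\<^sub>m Tadj A + Tadj B) $$ (i,j)"
      using car ij by simp
    finally show "Tadj (c \<cdot>\<^sub>m A + B) $$ (i,j) = (c \<cdot>\<^sub>m Tadj A + Tadj B) $$ (i,j)" .
  qed (use car in simp_all)
qed (rule adjoint_carrier)

lemma trace_preserving_adjoint:
  assumes T1: "T (1\<^sub>m d) = 1\<^sub>m d"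
  shows "trace_preserving d Tadj"
  unfolding trace_preserving_def
proof
  fix A :: "complex mat" assume A: "A \<in> carrier_mat d d"
  have "ctrace (Tadj A) = hs_inner d (1\<^sub>m d) (Tadj A)"
    using hs_inner_one[OF adjoint_carrier[OF A]] by simp
  also have "\<dots> = hs_inner d ((T ^^ 1) (1\<^sub>m d)) A"
    using hs_inner_adjoint_funpow'[OF one_carrier_mat A, of 1] by simp
  finally show "ctrace (Tadj A) = ctrace A"
    using T1 hs_inner_one[OF A] by simp
qed

lemma adjoint_product_self_adjoint:
  assumes "A \<in> carrier_mat d d" "B \<in> carrier_mat d d"
  shows "hs_inner d A (((Tadj ^^ n) \<circ> (T ^^ n)) B) = hs_inner d (((Tadj ^^ n) \<circ> (T ^^ n)) A) B"
proof -
  have TA: "(T ^^ n) A \<in> carrier_mat d d" and TB: "(T ^^ n) B \<in> carrier_mat d d"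
    using assms linear_superop_carrier[OF linear_superop_funpow[OF linT]] by auto
  have "hs_inner d A ((Tadj ^^ n) ((T ^^ n) B)) = hs_inner d ((T ^^ n) A) ((T ^^ n) B)"
    by (rule hs_inner_adjoint_funpow'[OF assms(1) TB])
  also have "\<dots> = hs_inner d ((Tadj ^^ n) ((T ^^ n) A)) B"
    by (rule hs_inner_adjoint_funpow[OF TA assms(2)])
  finally show ?thesis
    by simp
qed

lemma linear_superop_adjoint_product: "linear_superop d ((Tadj ^^ n) \<circ> (T ^^ n))"
  by (intro linear_superop_comp linear_superop_funpow linear_superop_adjoint linT)

lemma adjoint_funpow_contraction:
  assumes adj_traceless: "\<And>X. traceless d X \<Longrightarrow> traceless d (Tadj X)" and c: "0 \<le> c"
    and contr: "\<And>X. traceless d X \<Longrightarrow> hs_norm_sq d ((T ^^ n) X) \<le> c * hs_norm_sq d X"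
    and Y: "traceless d Y"
  shows "hs_norm_sq d ((Tadj ^^ n) Y) \<le> c * hs_norm_sq d Y"
proof -
  define Z where "Z = (Tadj ^^ n) Y"
  have Z: "traceless d Z"
    unfolding Z_def by (rule traceless_funpow[OF adj_traceless Y])
  have "hs_norm_sq d Z = cmod (hs_inner d Y ((T ^^ n) Z))"
    using hs_inner_adjoint_funpow[of Y Z n] Y Z norm_hs_inner_self[of d Z]
    by (simp add: Z_def traceless_def)
  then have "hs_norm_sq d Z ^ 2 \<le> hs_norm_sq d Y * hs_norm_sq d ((T ^^ n) Z)"
    using hs_inner_Cauchy_Schwarz by simp
  also have "\<dots> \<le> hs_norm_sq d Y * (c * hs_norm_sq d Z)"
    using contr[OF Z] by (intro mult_left_mono) (auto simp: hs_norm_sq_nonneg)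
  finally have "hs_norm_sq d Z * hs_norm_sq d Z \<le> (c * hs_norm_sq d Y) * hs_norm_sq d Z"
    by (simp add: power2_eq_square ac_simps)
  then have "hs_norm_sq d Z \<le> c * hs_norm_sq d Y"
    using c hs_norm_sq_nonneg[of d Z] hs_norm_sq_nonneg[of d Y]
    by (cases "hs_norm_sq d Z = 0") (auto simp: mult_le_cancel_right)
  then show ?thesis
    by (simp add: Z_def)
qed

lemma funpow_contraction_of_adjoint_product:
  assumes SN: "\<And>X. traceless d X \<Longrightarrow>
      hs_norm_sq d ((((Tadj ^^ n) \<circ> (T ^^ n)) ^^ (2^j)) X) \<le> hs_norm_sq d X / 2"
    and X: "traceless d X"
  shows "hs_norm_sq d ((T ^^ n) X) \<le> root (2 * 2^j) (1/2) * hs_norm_sq d X"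
proof -
  define S where "S = (Tadj ^^ n) \<circ> (T ^^ n)"
  define N :: nat where "N = 2^j"
  have Xc: "X \<in> carrier_mat d d"
    using X by (simp add: traceless_def)
  have S_bound: "hs_norm_sq d (S X) ^ N \<le> hs_norm_sq d X ^ N / 2"
    unfolding S_def N_def
    using linear_superop_carrier[OF linear_superop_adjoint_product] adjoint_product_self_adjoint Xc SN[OF X]
    by (rule self_adjoint_contraction_of_power)
  have "hs_norm_sq d ((T ^^ n) X) = cmod (hs_inner d X (S X))"
    using hs_inner_adjoint_funpow'[OF Xc linear_superop_carrier[OF linear_superop_funpow[OF linT] Xc]]
      norm_hs_inner_self[of d "(T ^^ n) X"]
    by (simp add: S_def)
  then have T_bound: "hs_norm_sq d ((T ^^ n) X) ^ 2 \<le> hs_norm_sq d X * hs_norm_sq d (S X)"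
    using hs_inner_Cauchy_Schwarz by simp
  have "hs_norm_sq d ((T ^^ n) X) ^ (2 * N) = (hs_norm_sq d ((T ^^ n) X) ^ 2) ^ N"
    by (simp add: power_mult)
  also have "\<dots> \<le> (hs_norm_sq d X * hs_norm_sq d (S X)) ^ N"
    using T_bound by (intro power_mono) auto
  also have "\<dots> = hs_norm_sq d X ^ N * hs_norm_sq d (S X) ^ N"
    by (simp add: power_mult_distrib)
  also have "\<dots> \<le> hs_norm_sq d X ^ N * (hs_norm_sq d X ^ N / 2)"
    using S_bound by (intro mult_left_mono) (auto simp: hs_norm_sq_nonneg)
  also have "\<dots> = hs_norm_sq d X ^ (2 * N) / 2"
    by (simp add: mult_2 power_add)
  finally show ?thesis
    unfolding N_def using hs_norm_sq_nonneg by (intro le_root_half_mult) simp_all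
qed

context
  assumes tpT: "trace_preserving d T" and T1: "T (1\<^sub>m d) = 1\<^sub>m d" and A1: "Tadj (1\<^sub>m d) = 1\<^sub>m d"
begin

lemma traceless_channel: "traceless d X \<Longrightarrow> traceless d (T X)"
  by (rule traceless_trace_preserving[OF linT tpT])

lemma traceless_adjoint: "traceless d X \<Longrightarrow> traceless d (Tadj X)"
  by (rule traceless_trace_preserving[OF linear_superop_adjoint trace_preserving_adjoint[OF T1]])

lemma adjoint_product_unital: "((Tadj ^^ n) \<circ> (T ^^ n)) (1\<^sub>m d) = 1\<^sub>m d"
  by (simp add: funpow_fixpoint[of T, OF T1] funpow_fixpoint[of Tadj, OF A1])

lemma traceless_adjoint_product: "traceless d X \<Longrightarrow> traceless d (((Tadj ^^ n) \<circ> (T ^^ n)) X)"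
  by (simp add: traceless_funpow[OF traceless_channel] traceless_funpow[OF traceless_adjoint])

lemma primitive_imp_primitive_adjoint_product:
  assumes "primitive d T"
  shows "\<exists>n. primitive d ((Tadj ^^ n) \<circ> (T ^^ n))"
proof -
  have "mixing d T"
    by (rule primitive_imp_mixing[OF linT T1 assms])
  then have "\<forall>\<^sub>F k in sequentially. \<forall>X. traceless d X \<longrightarrow>
      hs_norm_sq d ((T ^^ k) X) \<le> 1/4 * hs_norm_sq d X"
    by (rule mixing_imp_eventually_contraction[OF linT]) simp
  then obtain n where T_contr: "\<And>X. traceless d X \<Longrightarrow> hs_norm_sq d ((T ^^ n) X) \<le> 1/4 * hs_norm_sq d X"
    unfolding eventually_sequentially by blast
  have S_contr: "hs_norm_sq d ((((Tadj ^^ n) \<circ> (T ^^ n)) ^^ 1) X) \<le> 1/16 * hs_norm_sq d X"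
    if X: "traceless d X" for X
  proof -
    have "hs_norm_sq d ((Tadj ^^ n) ((T ^^ n) X)) \<le> 1/4 * hs_norm_sq d ((T ^^ n) X)"
      using adjoint_funpow_contraction[OF traceless_adjoint _ T_contr
            traceless_funpow[OF traceless_channel X]] by simp
    also have "\<dots> \<le> 1/16 * hs_norm_sq d X"
      using T_contr[OF X] by simp
    finally show ?thesis
      by simp
  qed
  have c: "(0::real) \<le> 1/16" "(1/16::real) < 1"
    by simp_all
  have "mixing d ((Tadj ^^ n) \<circ> (T ^^ n))"
    by (rule power_contraction_imp_mixing[OF traceless_adjoint_product c S_contr])
  then show ?thesis
    using primitive_iff_mixing[OF linear_superop_adjoint_product adjoint_product_unital] by blast
qed

lemma primitive_adjoint_product_imp_primitive:
  assumes "primitive d ((Tadj ^^ n) \<circ> (T ^^ n))"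
  shows "primitive d T"
proof -
  have "mixing d ((Tadj ^^ n) \<circ> (T ^^ n))"
    using assms primitive_iff_mixing[OF linear_superop_adjoint_product adjoint_product_unital] by blast
  then have "\<forall>\<^sub>F k in sequentially. \<forall>X. traceless d X \<longrightarrow>
      hs_norm_sq d ((((Tadj ^^ n) \<circ> (T ^^ n)) ^^ k) X) \<le> 1/2 * hs_norm_sq d X"
    by (rule mixing_imp_eventually_contraction[OF linear_superop_adjoint_product]) simp
  then obtain K where S_contr: "\<And>k X. k \<ge> K \<Longrightarrow> traceless d X \<Longrightarrow>
      hs_norm_sq d ((((Tadj ^^ n) \<circ> (T ^^ n)) ^^ k) X) \<le> 1/2 * hs_norm_sq d X"
    unfolding eventually_sequentially by blast
  have "K \<le> 2 ^ K"
    by (simp add: less_imp_le)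
  then have T_contr: "hs_norm_sq d ((T ^^ n) X) \<le> root (2 * 2^K) (1/2) * hs_norm_sq d X"
    if "traceless d X" for X
    using S_contr that by (intro funpow_contraction_of_adjoint_product) simp_all
  have c0: "0 \<le> root (2 * 2^K) (1/2)" and c1: "root (2 * 2^K) (1/2) < 1"
    by (simp_all add: real_root_lt_1_iff)
  have "mixing d T"
    by (rule power_contraction_imp_mixing[OF traceless_channel c0 c1 T_contr])
  then show ?thesis
    using primitive_iff_mixing[OF linT T1] by blast
qed

end

end

theorem mainTheorem11:
  fixes d :: nat and T Tadj :: "complex mat \<Rightarrow> complex mat"
  assumes "is_hs_adjoint d T Tadj"
    and "doubly_stochastic_channel d T Tadj"
  shows "primitive d T \<longleftrightarrow> (\<exists>n :: nat. primitive d ((Tadj ^^ n) \<circ> (T ^^ n)))"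
proof -
  have "linear_superop d T" "trace_preserving d T" "T (1\<^sub>m d) = 1\<^sub>m d" "Tadj (1\<^sub>m d) = 1\<^sub>m d"
    using assms(2) by (simp_all add: doubly_stochastic_channel_def quantum_channel_def)
  then show ?thesis
    using primitive_imp_primitive_adjoint_product[OF assms(1)]
      primitive_adjoint_product_imp_primitive[OF assms(1)]
    by blast
qed

end
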